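(* There exist absolute constants $c_1,c_2>0$ and $N$ such that for every prime power $q$ and all integers $1\le d\le n$ with $q^n\ge N$, $$c_1\frac{q^n}{d}\le \bigl|\{F\in\mathcal{M}_n: \deg P^-(F)\ge d\}\bigr|\le c_2\frac{q^n}{d}.$$
   Context: $q$ is a prime power; $\mathcal{M}_n$ is the set of monic polynomials of degree $n$ in $\mathbb{F}_q[t]$. For monic $F$ of positive degree, $P^-(F)$ denotes a monic irreducible divisor of $F$ of smallest degree. *)

theory Defs
  imports "HOL-Algebra.Polynomial_Divisibility"
begin

text \<open>Polynomials over a field R are the HOL-Algebra list representation
  (coefficients, leading coefficient first), living in poly_ring R.\<close>

definition monic_poly :: "('a, 'b) ring_scheme \<Rightarrow> 'a list \<Rightarrow> bool" where
  "monic_poly R F \<longleftrightarrow> F \<in> carrier (poly_ring R) \<and> F \<noteq> [] \<and> lead_coeff F = \<one>\<^bsub>R\<^esub>"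

definition monic_polys_deg :: "('a, 'b) ring_scheme \<Rightarrow> nat \<Rightarrow> 'a list set" where
  "monic_polys_deg R n = {F. monic_poly R F \<and> degree F = n}"

definition min_irred_factor_deg :: "('a, 'b) ring_scheme \<Rightarrow> 'a list \<Rightarrow> nat" where
  "min_irred_factor_deg R F =
     Min {degree P | P. monic_poly R P \<and> pirreducible\<^bsub>R\<^esub> (carrier R) P \<and> P pdivides\<^bsub>R\<^esub> F}"

end

theory Submission
  imports Defs
begin

text \<open>Write \<open>I k\<close> for the number of monic irreducible polynomials of degree \<open>k\<close> over \<open>\<bbbF>\<^sub>q\<close> and
  \<open>\<rho> m\<close> for the number of monic polynomials of degree \<open>m\<close> all of whose irreducible factors have degree
  at least \<open>d\<close>. Summing \<open>degree F = (\<Sum>P\<^sup>j dvd F. degree P)\<close> over these polynomials gives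
  \<open>m \<rho> m = (\<Sum>k\<ge>d. k I k \<Sum>j\<ge>1. \<rho> (m - j k))\<close>. For \<open>d = 1\<close> this is equivalent to Gauss's formula
  \<open>(\<Sum>k dvd n. k I k) = q\<^sup>n\<close>, whence \<open>q\<^sup>k - 2 q\<^bsup>k div 2\<^esup> \<le> k I k \<le> q\<^sup>k\<close>. In the recurrence the terms
  with \<open>j \<ge> 2\<close> add up to at most \<open>4 q\<^sup>m / d\<close>, \<open>\<rho> (m - k)\<close> vanishes for \<open>m - d < k < m\<close>, the term
  \<open>k = m\<close> is about \<open>q\<^sup>m\<close>, and by induction each \<open>k \<in> {d..m-d}\<close> contributes about \<open>q\<^sup>m / d\<close>. As there
  are about \<open>m\<close> such \<open>k\<close>, strong induction on \<open>m\<close> gives \<open>q\<^sup>m / (12 d) \<le> \<rho> m \<le> 5 q\<^sup>m / d\<close>.\<close>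

sublocale field \<subseteq> UP: principal_domain "poly_ring R"
  by (rule univ_poly_is_principal[OF carrier_is_subfield])

section \<open>Polynomials over a field\<close>

context field
begin

lemma monic_poly_carrier: "monic_poly R F \<Longrightarrow> F \<in> carrier (poly_ring R)"
  unfolding monic_poly_def by simp

lemma monic_poly_not_Nil: "monic_poly R F \<Longrightarrow> F \<noteq> []"
  unfolding monic_poly_def by simp

lemma monic_poly_one: "monic_poly R [\<one>]"
  unfolding monic_poly_def univ_poly_carrier[symmetric] by (auto simp: polynomial_def)

lemma monic_poly_mult:
  assumes "monic_poly R P" "monic_poly R G"
  shows "monic_poly R (P \<otimes>\<^bsub>poly_ring R\<^esub> G)"
    and "degree (P \<otimes>\<^bsub>poly_ring R\<^esub> G) = degree P + degree G"
proof -
  have p: "polynomial (carrier R) P" "polynomial (carrier R) G" and ne: "P \<noteq> []" "G \<noteq> []"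
    using assms unfolding monic_poly_def univ_poly_carrier by auto
  have "poly_mult P G \<noteq> []" using poly_mult_integral[OF carrier_is_subring p] ne by auto
  moreover have "lead_coeff (poly_mult P G) = \<one>"
    using poly_mult_lead_coeff[OF carrier_is_subring p ne] assms by (simp add: monic_poly_def)
  moreover have "polynomial (carrier R) (poly_mult P G)"
    using poly_mult_closed[OF carrier_is_subring p] .
  ultimately show "monic_poly R (P \<otimes>\<^bsub>poly_ring R\<^esub> G)"
    unfolding monic_poly_def univ_poly_mult univ_poly_carrier by simp
  show "degree (P \<otimes>\<^bsub>poly_ring R\<^esub> G) = degree P + degree G"
    unfolding univ_poly_mult using poly_mult_degree_eq[OF carrier_is_subring p] ne by simp
qed

lemma monic_poly_pow:
  assumes "monic_poly R P"
  shows "monic_poly R (P [^]\<^bsub>poly_ring R\<^esub> (j::nat))"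
    and "degree (P [^]\<^bsub>poly_ring R\<^esub> j) = j * degree P"
proof -
  have "monic_poly R (P [^]\<^bsub>poly_ring R\<^esub> j) \<and> degree (P [^]\<^bsub>poly_ring R\<^esub> j) = j * degree P"
  proof (induction j)
    case 0
    show ?case using monic_poly_one by (simp add: univ_poly_one)
  next
    case (Suc j)
    thus ?case using monic_poly_mult[OF _ assms, of "P [^]\<^bsub>poly_ring R\<^esub> j"] by simp
  qed
  thus "monic_poly R (P [^]\<^bsub>poly_ring R\<^esub> j)" "degree (P [^]\<^bsub>poly_ring R\<^esub> j) = j * degree P"
    by auto
qed

lemma monic_poly_associated_eq:
  assumes "monic_poly R P" "monic_poly R Q" "P \<sim>\<^bsub>poly_ring R\<^esub> Q"
  shows "P = Q"
proof -
  obtain k where k: "k \<in> carrier R - {\<zero>}" "P = [k] \<otimes>\<^bsub>poly_ring R\<^esub> Q"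
    using assms(3) associated_polynomials_iff[OF carrier_is_subfield]
      monic_poly_carrier[OF assms(1)] monic_poly_carrier[OF assms(2)] by blast
  have pk: "polynomial (carrier R) [k]" and pQ: "polynomial (carrier R) Q"
    using k assms(2) unfolding monic_poly_def univ_poly_carrier[symmetric] by (auto simp: polynomial_def)
  have "lead_coeff P = k \<otimes> lead_coeff Q"
    using poly_mult_lead_coeff[OF carrier_is_subring pk pQ] monic_poly_not_Nil[OF assms(2)] k(2)
    by (simp add: univ_poly_mult)
  hence "k = \<one>" using assms k by (simp add: monic_poly_def)
  thus ?thesis using k(2) UP.l_one[OF monic_poly_carrier[OF assms(2)]] by (simp add: univ_poly_one)
qed

lemma monic_pdividesE:
  assumes "monic_poly R Q" "monic_poly R F" "Q pdivides F"
  obtains G where "monic_poly R G" "F = Q \<otimes>\<^bsub>poly_ring R\<^esub> G"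
proof -
  obtain G where G: "G \<in> carrier (poly_ring R)" "F = Q \<otimes>\<^bsub>poly_ring R\<^esub> G"
    using assms(3) unfolding pdivides_def by auto
  have "G \<noteq> []" using G monic_poly_not_Nil[OF assms(2)] monic_poly_carrier[OF assms(1)]
    by (metis UP.r_null univ_poly_zero)
  have p: "polynomial (carrier R) Q" "polynomial (carrier R) G"
    using assms(1) G(1) unfolding monic_poly_def univ_poly_carrier by auto
  have "lead_coeff F = \<one> \<otimes> lead_coeff G"
    using poly_mult_lead_coeff[OF carrier_is_subring p] monic_poly_not_Nil[OF assms(1)] \<open>G \<noteq> []\<close> G(2) assms(1)
    by (simp add: univ_poly_mult monic_poly_def)
  moreover have "lead_coeff G \<in> carrier R" using p(2) \<open>G \<noteq> []\<close>
    by (cases G) (auto simp: polynomial_def)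
  ultimately have "monic_poly R G" using assms(2) G(1) \<open>G \<noteq> []\<close> by (simp add: monic_poly_def)
  thus ?thesis using that G(2) by blast
qed

lemma monic_poly_pdivides_degree_le:
  assumes "P \<in> carrier (poly_ring R)" "monic_poly R F" "P pdivides F"
  shows "degree P \<le> degree F"
  using pdivides_imp_degree_le[OF carrier_is_subring assms(1) monic_poly_carrier[OF assms(2)]
     monic_poly_not_Nil[OF assms(2)]] assms(3) .

lemma exists_monic_associated:
  assumes "B \<in> carrier (poly_ring R)" "B \<noteq> []"
  obtains U where "U \<in> Units (poly_ring R)" "monic_poly R (U \<otimes>\<^bsub>poly_ring R\<^esub> B)"
proof -
  have p: "polynomial (carrier R) B" using assms(1) univ_poly_carrier by blast
  define c where "c = lead_coeff B"
  have c: "c \<in> carrier R - {\<zero>}" using p assms(2) unfolding c_def polynomial_def by (cases B) auto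
  hence c_inv: "inv c \<in> carrier R - {\<zero>}" "inv c \<otimes> c = \<one>" using field_Units by auto
  hence U: "[inv c] \<in> Units (poly_ring R)" using univ_poly_units[OF carrier_is_subfield] by auto
  have "polynomial (carrier R) [inv c]" using c_inv by (auto simp: polynomial_def)
  hence "lead_coeff (poly_mult [inv c] B) = lead_coeff [inv c] \<otimes> lead_coeff B"
    by (rule poly_mult_lead_coeff[OF carrier_is_subring _ p]) (simp_all add: assms(2))
  hence "lead_coeff ([inv c] \<otimes>\<^bsub>poly_ring R\<^esub> B) = \<one>"
    using c_inv unfolding univ_poly_mult c_def by simp
  moreover have "[inv c] \<otimes>\<^bsub>poly_ring R\<^esub> B \<in> carrier (poly_ring R) - {[]}"
    using U assms UP.integral_iff[of "[inv c]" B] by (auto simp: univ_poly_zero)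
  ultimately show ?thesis using that[OF U] by (simp add: monic_poly_def)
qed

lemma exists_monic_pirreducible_pdivisor:
  assumes "monic_poly R F" "degree F \<ge> 1"
  obtains P where "monic_poly R P" "pirreducible (carrier R) P" "P pdivides F"
proof -
  have "F \<in> carrier (poly_ring R) - {\<zero>\<^bsub>poly_ring R\<^esub>}"
    using monic_poly_carrier[OF assms(1)] monic_poly_not_Nil[OF assms(1)] by (simp add: univ_poly_zero)
  moreover have "F \<notin> Units (poly_ring R)"
    using univ_poly_units'[OF carrier_is_subfield, of F] assms(2) by linarith
  ultimately obtain B where B: "B \<in> carrier (poly_ring R)" "pirreducible (carrier R) B"
     "B divides\<^bsub>poly_ring R\<^esub> F"
    using UP.exists_irreducible_divisor by blast
  have "B \<noteq> []" using pirreducibleE(1)[OF carrier_is_subring B(1,2)] .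
  then obtain U where U: "U \<in> Units (poly_ring R)" "monic_poly R (U \<otimes>\<^bsub>poly_ring R\<^esub> B)"
    using exists_monic_associated[OF B(1)] by blast
  have "pirreducible (carrier R) (U \<otimes>\<^bsub>poly_ring R\<^esub> B)"
    using B(2) U UP.irreducible_prod_lI[of B U] B(1) monic_poly_not_Nil[OF U(2)]
    unfolding ring_irreducible_def by (auto simp: univ_poly_zero)
  moreover have "U \<otimes>\<^bsub>poly_ring R\<^esub> B pdivides F"
  proof -
    have "U \<otimes>\<^bsub>poly_ring R\<^esub> B \<sim>\<^bsub>poly_ring R\<^esub> B"
      using UP.associatedI2[OF U(1) UP.m_comm[OF UP.Units_closed[OF U(1)] B(1)] B(1)] .
    hence "U \<otimes>\<^bsub>poly_ring R\<^esub> B divides\<^bsub>poly_ring R\<^esub> B" by (rule associatedD)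
    thus ?thesis using B(3) monic_poly_carrier[OF U(2)] unfolding pdivides_def by (meson UP.divides_trans)
  qed
  ultimately show ?thesis using that U(2) by blast
qed

lemma pirreducible_degree_ge_1:
  "monic_poly R P \<Longrightarrow> pirreducible (carrier R) P \<Longrightarrow> degree P \<ge> 1"
  using pirreducible_degree[OF carrier_is_subfield monic_poly_carrier] by blast

lemma monic_pirreducible_pdivides_eq:
  assumes "monic_poly R P" "pirreducible (carrier R) P" "monic_poly R Q" "pirreducible (carrier R) Q"
    and "Q pdivides P"
  shows "Q = P"
proof -
  have "Q \<in> Units (poly_ring R) \<or> Q \<sim>\<^bsub>poly_ring R\<^esub> P"
    using divides_pirreducible_condition[OF assms(2) monic_poly_carrier[OF assms(3)]] assms(5)
    unfolding pdivides_def by blast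
  moreover have "Q \<notin> Units (poly_ring R)"
    using pirreducibleE(2)[OF carrier_is_subring monic_poly_carrier[OF assms(3)] assms(4)] .
  ultimately show ?thesis using monic_poly_associated_eq[OF assms(3,1)] by blast
qed

lemma pirreducible_pdivides_mult:
  assumes "Q \<in> carrier (poly_ring R)" "pirreducible (carrier R) Q"
    and "A \<in> carrier (poly_ring R)" "B \<in> carrier (poly_ring R)" "Q pdivides A \<otimes>\<^bsub>poly_ring R\<^esub> B"
  shows "Q pdivides A \<or> Q pdivides B"
  using pprimeE(3)[OF carrier_is_subfield assms(1)] pprime_iff_pirreducible[OF carrier_is_subfield assms(1)]
    assms(2-5) by blast

lemma monic_pirreducible_pdivides_pow:
  assumes "monic_poly R P" "pirreducible (carrier R) P" "monic_poly R Q" "pirreducible (carrier R) Q"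
    and "Q pdivides P [^]\<^bsub>poly_ring R\<^esub> (j::nat)"
  shows "Q = P"
  using assms(5)
proof (induction j)
  case 0
  hence "degree Q \<le> degree [\<one>]"
    using monic_poly_pdivides_degree_le[OF monic_poly_carrier[OF assms(3)] monic_poly_one]
    by (simp add: univ_poly_one)
  thus ?case using pirreducible_degree_ge_1[OF assms(3,4)] by simp
next
  case (Suc j)
  hence "Q pdivides P [^]\<^bsub>poly_ring R\<^esub> j \<or> Q pdivides P"
    using pirreducible_pdivides_mult[OF monic_poly_carrier[OF assms(3)] assms(4)] monic_poly_carrier[OF assms(1)]
    by simp
  thus ?case using Suc.IH monic_pirreducible_pdivides_eq[OF assms(1-4)] by blast
qed

lemma pow_pdivides_imp_pdivides:
  assumes "P \<in> carrier (poly_ring R)" "P [^]\<^bsub>poly_ring R\<^esub> (j::nat) pdivides F" "j \<ge> 1"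
  shows "P pdivides F"
proof -
  obtain i where "j = Suc i" using assms(3) by (cases j) auto
  hence "P divides\<^bsub>poly_ring R\<^esub> P [^]\<^bsub>poly_ring R\<^esub> j"
    using assms(1) by (auto intro: UP.divides_prod_l)
  thus ?thesis using assms(1,2) unfolding pdivides_def by (meson UP.divides_trans)
qed

lemma pow_Suc_pdivides_mult_iff:
  assumes "P \<in> carrier (poly_ring R)" "P \<noteq> []" "G \<in> carrier (poly_ring R)"
  shows "P [^]\<^bsub>poly_ring R\<^esub> Suc j pdivides P \<otimes>\<^bsub>poly_ring R\<^esub> G
     \<longleftrightarrow> P [^]\<^bsub>poly_ring R\<^esub> (j::nat) pdivides G"
  using UP.divides_mult[OF _ assms(1)] UP.mult_divides[OF _ assms(3), of _ P] assms
  unfolding pdivides_def UP.nat_pow_Suc2[OF assms(1)] by (auto simp: univ_poly_zero)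

lemma pow_pdivides_mult_iff:
  assumes "monic_poly R P" "pirreducible (carrier R) P" "monic_poly R Q" "pirreducible (carrier R) Q"
    and "Q \<noteq> P" "G \<in> carrier (poly_ring R)"
  shows "Q [^]\<^bsub>poly_ring R\<^esub> (j::nat) pdivides P \<otimes>\<^bsub>poly_ring R\<^esub> G
     \<longleftrightarrow> Q [^]\<^bsub>poly_ring R\<^esub> j pdivides G"
proof -
  have "\<not> Q pdivides P" using monic_pirreducible_pdivides_eq[OF assms(1-4)] assms(5) by blast
  thus ?thesis using pirreducible_pow_pdivides_iff[OF carrier_is_subfield monic_poly_carrier[OF assms(3)]
      monic_poly_carrier[OF assms(1)] assms(6) assms(4)] by blast
qed

lemma pow_pdivides_degree_le:
  assumes "monic_poly R P" "pirreducible (carrier R) P" "monic_poly R F"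
    and "P [^]\<^bsub>poly_ring R\<^esub> (j::nat) pdivides F"
  shows "j * degree P \<le> degree F" "j \<le> degree F"
proof -
  have "degree (P [^]\<^bsub>poly_ring R\<^esub> j) \<le> degree F"
    using monic_poly_pdivides_degree_le[OF monic_poly_carrier[OF monic_poly_pow(1)[OF assms(1)]] assms(3,4)] .
  thus "j * degree P \<le> degree F" unfolding monic_poly_pow(2)[OF assms(1)] .
  moreover have "j \<le> j * degree P" using pirreducible_degree_ge_1[OF assms(1,2)] by simp
  ultimately show "j \<le> degree F" by linarith
qed

lemma monic_polys_deg_eq_image:
  "monic_polys_deg R m = (\<lambda>xs. \<one> # xs) ` {xs. set xs \<subseteq> carrier R \<and> length xs = m}"
proof (intro equalityI subsetI)
  fix F assume "F \<in> monic_polys_deg R m"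
  hence F: "monic_poly R F" "degree F = m" unfolding monic_polys_deg_def by auto
  then obtain a xs where F_Cons: "F = a # xs" unfolding monic_poly_def by (cases F) auto
  have "a = \<one>" "set F \<subseteq> carrier R"
    using F(1) F_Cons unfolding monic_poly_def univ_poly_carrier[symmetric] polynomial_def by auto
  thus "F \<in> (\<lambda>xs. \<one> # xs) ` {xs. set xs \<subseteq> carrier R \<and> length xs = m}"
    using F_Cons F(2) by auto
next
  fix F assume "F \<in> (\<lambda>xs. \<one> # xs) ` {xs. set xs \<subseteq> carrier R \<and> length xs = m}"
  then obtain xs where xs: "F = \<one> # xs" "set xs \<subseteq> carrier R" "length xs = m" by auto
  hence "polynomial (carrier R) F" unfolding polynomial_def by auto
  thus "F \<in> monic_polys_deg R m"
    unfolding monic_polys_deg_def monic_poly_def using xs univ_poly_carrier by auto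
qed

lemma card_pow_pdivides_mult:
  assumes P: "monic_poly R P" "pirreducible (carrier R) P" and G: "monic_poly R G"
  shows "card {j::nat. 0 < j \<and> P [^]\<^bsub>poly_ring R\<^esub> j pdivides P \<otimes>\<^bsub>poly_ring R\<^esub> G}
    = Suc (card {j::nat. 0 < j \<and> P [^]\<^bsub>poly_ring R\<^esub> j pdivides G})"
proof -
  define E where "E H = {j::nat. 0 < j \<and> P [^]\<^bsub>poly_ring R\<^esub> j pdivides H}" for H
  have "P [^]\<^bsub>poly_ring R\<^esub> (0::nat) pdivides G"
    using monic_poly_carrier[OF G] unfolding pdivides_def by (simp add: UP.one_divides)
  hence "j \<in> E (P \<otimes>\<^bsub>poly_ring R\<^esub> G) \<longleftrightarrow> j \<in> insert 1 (Suc ` E G)" for j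
  proof (cases j)
    case (Suc i)
    have "j \<in> E (P \<otimes>\<^bsub>poly_ring R\<^esub> G) \<longleftrightarrow> P [^]\<^bsub>poly_ring R\<^esub> i pdivides G"
      using pow_Suc_pdivides_mult_iff[OF monic_poly_carrier[OF P(1)] monic_poly_not_Nil[OF P(1)]
          monic_poly_carrier[OF G]]
      unfolding E_def Suc by simp
    also have "\<dots> \<longleftrightarrow> i = 0 \<or> i \<in> E G" using \<open>P [^]\<^bsub>poly_ring R\<^esub> (0::nat) pdivides G\<close>
      unfolding E_def by auto
    finally show ?thesis unfolding Suc by auto
  qed (simp add: E_def)
  hence "E (P \<otimes>\<^bsub>poly_ring R\<^esub> G) = insert 1 (Suc ` E G)" by blast
  moreover have "E G \<subseteq> {..degree G}" using pow_pdivides_degree_le(2)[OF P G] unfolding E_def by auto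
  hence "finite (E G)" by (rule finite_subset) simp
  moreover have "1 \<notin> Suc ` E G" unfolding E_def by auto
  ultimately show ?thesis unfolding E_def by (simp add: card_image)
qed

definition prime_power_divisors :: "'a list \<Rightarrow> ('a list \<times> nat) set" where
  "prime_power_divisors F = {(P, j). monic_poly R P \<and> pirreducible (carrier R) P \<and> 0 < j \<and>
     P [^]\<^bsub>poly_ring R\<^esub> j pdivides F}"

definition rough :: "nat \<Rightarrow> 'a list \<Rightarrow> bool" where
  "rough d F \<longleftrightarrow> (\<forall>P. monic_poly R P \<and> pirreducible (carrier R) P \<and> P pdivides F \<longrightarrow> d \<le> degree P)"

definition rough_polys :: "nat \<Rightarrow> nat \<Rightarrow> 'a list set" where
  "rough_polys d m = {F \<in> monic_polys_deg R m. rough d F}"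

definition monic_irreducibles :: "nat \<Rightarrow> 'a list set" where
  "monic_irreducibles k = {P. monic_poly R P \<and> pirreducible (carrier R) P \<and> degree P = k}"

definition rough_prime_powers :: "nat \<Rightarrow> nat \<Rightarrow> ('a list \<times> nat) set" where
  "rough_prime_powers d m = {(P, j). monic_poly R P \<and> pirreducible (carrier R) P \<and> d \<le> degree P \<and>
     0 < j \<and> j * degree P \<le> m}"

lemma rough_polys_1: "rough_polys 1 m = monic_polys_deg R m"
proof -
  have "rough 1 F" for F unfolding rough_def using pirreducible_degree_ge_1 by blast
  thus ?thesis unfolding rough_polys_def by simp
qed

lemma rough_polys_0: "rough_polys d 0 = {[\<one>]}"
proof -
  have "rough d [\<one>]" unfolding rough_def
    using monic_poly_pdivides_degree_le[OF monic_poly_carrier monic_poly_one] pirreducible_degree_ge_1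
    by fastforce
  moreover have "monic_polys_deg R 0 = {[\<one>]}" unfolding monic_polys_deg_eq_image by auto
  ultimately show ?thesis unfolding rough_polys_def by auto
qed

lemma min_irred_factor_deg_ge_iff_rough:
  assumes "monic_poly R F" "degree F \<ge> 1"
  shows "d \<le> min_irred_factor_deg R F \<longleftrightarrow> rough d F"
proof -
  define D where "D = {degree P | P. monic_poly R P \<and> pirreducible (carrier R) P \<and> P pdivides F}"
  obtain P where "monic_poly R P" "pirreducible (carrier R) P" "P pdivides F"
    using exists_monic_pirreducible_pdivisor[OF assms] .
  hence "D \<noteq> {}" unfolding D_def by blast
  moreover have "D \<subseteq> {..degree F}"
    unfolding D_def using monic_poly_pdivides_degree_le[OF monic_poly_carrier assms(1)] by auto
  hence "finite D" by (rule finite_subset) simp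
  ultimately have "d \<le> min_irred_factor_deg R F \<longleftrightarrow> (\<forall>k\<in>D. d \<le> k)"
    unfolding min_irred_factor_deg_def D_def[symmetric] by simp
  also have "\<dots> \<longleftrightarrow> rough d F" unfolding D_def rough_def by auto
  finally show ?thesis .
qed

lemma rough_pow_mult_iff:
  assumes P: "monic_poly R P" "pirreducible (carrier R) P" "d \<le> degree P"
    and G: "G \<in> carrier (poly_ring R)"
  shows "rough d (P [^]\<^bsub>poly_ring R\<^esub> (j::nat) \<otimes>\<^bsub>poly_ring R\<^esub> G) \<longleftrightarrow> rough d G"
proof -
  let ?A = "P [^]\<^bsub>poly_ring R\<^esub> j"
  have A: "?A \<in> carrier (poly_ring R)" using monic_poly_carrier[OF monic_poly_pow(1)[OF P(1)]] .
  have "Q pdivides ?A \<otimes>\<^bsub>poly_ring R\<^esub> G \<longleftrightarrow> Q pdivides ?A \<or> Q pdivides G"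
    if Q: "monic_poly R Q" "pirreducible (carrier R) Q" for Q
    using pirreducible_pdivides_mult[OF monic_poly_carrier[OF Q(1)] Q(2) A G]
      UP.divides_prod_r[of Q ?A G] UP.divides_prod_l[of Q G ?A] A G monic_poly_carrier[OF Q(1)]
    unfolding pdivides_def by blast
  moreover have "d \<le> degree Q" if "monic_poly R Q" "pirreducible (carrier R) Q" "Q pdivides ?A" for Q
    using monic_pirreducible_pdivides_pow[OF P(1,2) that] P(3) by simp
  ultimately show ?thesis unfolding rough_def by blast
qed

lemma rough_polys_pow_pdivides_eq_image:
  assumes P: "monic_poly R P" "pirreducible (carrier R) P" "d \<le> degree P" and "j * degree P \<le> m"
  shows "{F \<in> rough_polys d m. P [^]\<^bsub>poly_ring R\<^esub> (j::nat) pdivides F}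
    = (\<lambda>G. P [^]\<^bsub>poly_ring R\<^esub> j \<otimes>\<^bsub>poly_ring R\<^esub> G) ` rough_polys d (m - j * degree P)"
proof (intro equalityI subsetI)
  let ?A = "P [^]\<^bsub>poly_ring R\<^esub> j"
  have A: "monic_poly R ?A" "degree ?A = j * degree P" using monic_poly_pow[OF P(1)] by auto
  {
    fix F assume "F \<in> {F \<in> rough_polys d m. ?A pdivides F}"
    hence F: "monic_poly R F" "degree F = m" "rough d F" "?A pdivides F"
      unfolding rough_polys_def monic_polys_deg_def by auto
    obtain G where G: "monic_poly R G" "F = ?A \<otimes>\<^bsub>poly_ring R\<^esub> G"
      using monic_pdividesE[OF A(1) F(1,4)] .
    have "degree G = m - j * degree P" using monic_poly_mult(2)[OF A(1) G(1)] G(2) F(2) A(2) by simp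
    moreover have "rough d G" using rough_pow_mult_iff[OF P monic_poly_carrier[OF G(1)]] G(2) F(3) by simp
    ultimately show "F \<in> (\<lambda>G. ?A \<otimes>\<^bsub>poly_ring R\<^esub> G) ` rough_polys d (m - j * degree P)"
      using G unfolding rough_polys_def monic_polys_deg_def by auto
  next
    fix F assume "F \<in> (\<lambda>G. ?A \<otimes>\<^bsub>poly_ring R\<^esub> G) ` rough_polys d (m - j * degree P)"
    then obtain G where G: "F = ?A \<otimes>\<^bsub>poly_ring R\<^esub> G" "monic_poly R G" "degree G = m - j * degree P"
        "rough d G"
      unfolding rough_polys_def monic_polys_deg_def by auto
    have "monic_poly R F" "degree F = m" using monic_poly_mult[OF A(1) G(2)] G A(2) assms(4) by auto
    moreover have "rough d F" using rough_pow_mult_iff[OF P monic_poly_carrier[OF G(2)]] G by simp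
    moreover have "?A pdivides F"
      using G(1) monic_poly_carrier[OF A(1)] monic_poly_carrier[OF G(2)] unfolding pdivides_def by auto
    ultimately show "F \<in> {F \<in> rough_polys d m. ?A pdivides F}"
      unfolding rough_polys_def monic_polys_deg_def by simp
  }
qed

lemma card_rough_polys_pow_pdivides:
  assumes "monic_poly R P" "pirreducible (carrier R) P" "d \<le> degree P" "j * degree P \<le> m"
  shows "card {F \<in> rough_polys d m. P [^]\<^bsub>poly_ring R\<^esub> (j::nat) pdivides F}
    = card (rough_polys d (m - j * degree P))"
proof -
  let ?A = "P [^]\<^bsub>poly_ring R\<^esub> j"
  have "inj_on (\<lambda>G. ?A \<otimes>\<^bsub>poly_ring R\<^esub> G) (rough_polys d (m - j * degree P))"
  proof (rule inj_onI)
    fix G G' assume "G \<in> rough_polys d (m - j * degree P)" "G' \<in> rough_polys d (m - j * degree P)"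
      and "?A \<otimes>\<^bsub>poly_ring R\<^esub> G = ?A \<otimes>\<^bsub>poly_ring R\<^esub> G'"
    thus "G = G'"
      using UP.m_lcancel[of ?A G G'] monic_poly_pow(1)[OF assms(1)]
      unfolding rough_polys_def monic_polys_deg_def
      by (auto simp: univ_poly_zero dest: monic_poly_carrier monic_poly_not_Nil)
  qed
  thus ?thesis unfolding rough_polys_pow_pdivides_eq_image[OF assms] by (rule card_image)
qed

lemma rough_prime_powers_eq_Sigma:
  "rough_prime_powers d m = (SIGMA P:{P. monic_poly R P \<and> pirreducible (carrier R) P \<and> degree P \<in> {d..m}}.
     {1..m div degree P})"
proof -
  have "(P, j) \<in> rough_prime_powers d m \<longleftrightarrow> (P, j) \<in> (SIGMA P:{P. monic_poly R P \<and>
      pirreducible (carrier R) P \<and> degree P \<in> {d..m}}. {1..m div degree P})" for P and j :: nat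
  proof (cases "monic_poly R P \<and> pirreducible (carrier R) P")
    case True
    hence "degree P > 0" using pirreducible_degree_ge_1 by fastforce
    hence div: "j * degree P \<le> m \<longleftrightarrow> j \<le> m div degree P" by (simp add: less_eq_div_iff_mult_less_eq)
    moreover have "degree P \<le> m" if "0 < j" "j \<le> m div degree P"
    proof -
      have "degree P \<le> j * degree P" using that(1) by (cases j) auto
      thus ?thesis using that(2) div by linarith
    qed
    ultimately show ?thesis using True unfolding rough_prime_powers_def by auto
  qed (auto simp: rough_prime_powers_def)
  thus ?thesis by (simp add: Set.set_eq_iff split_paired_all)
qed

lemma prime_power_divisors_of_rough:
  assumes "F \<in> rough_polys d m"
  shows "prime_power_divisors F
    = {x \<in> rough_prime_powers d m. fst x [^]\<^bsub>poly_ring R\<^esub> snd x pdivides F}"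
proof (intro equalityI subsetI)
  have F: "monic_poly R F" "degree F = m" "rough d F"
    using assms unfolding rough_polys_def monic_polys_deg_def by auto
  fix x assume "x \<in> prime_power_divisors F"
  then obtain P and j :: nat where x: "x = (P, j)" "monic_poly R P" "pirreducible (carrier R) P" "0 < j"
      "P [^]\<^bsub>poly_ring R\<^esub> j pdivides F"
    unfolding prime_power_divisors_def by auto
  have "P pdivides F" using pow_pdivides_imp_pdivides[OF monic_poly_carrier[OF x(2)] x(5)] x(4) by simp
  hence "d \<le> degree P" using F(3) x(2,3) unfolding rough_def by blast
  moreover have "j * degree P \<le> m" using pow_pdivides_degree_le(1)[OF x(2,3) F(1) x(5)] F(2) by simp
  ultimately show "x \<in> {x \<in> rough_prime_powers d m. fst x [^]\<^bsub>poly_ring R\<^esub> snd x pdivides F}"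
    using x unfolding rough_prime_powers_def by auto
qed (auto simp: prime_power_divisors_def rough_prime_powers_def)

end

section \<open>Counting over a finite field\<close>

locale finite_field = field + assumes finite_carrier: "finite (carrier R)"
begin

lemma card_carrier_ge_2: "card (carrier R) \<ge> 2"
proof -
  have "card {\<zero>, \<one>} \<le> card (carrier R)" by (rule card_mono[OF finite_carrier]) auto
  thus ?thesis using zero_not_one by simp
qed

lemma card_monic_polys_deg: "card (monic_polys_deg R m) = card (carrier R) ^ m"
  unfolding monic_polys_deg_eq_image
  by (subst card_image) (auto simp: inj_on_def card_lists_length_eq[OF finite_carrier])

lemma finite_monic_polys_deg: "finite (monic_polys_deg R m)"
  unfolding monic_polys_deg_eq_image using finite_lists_length_eq[OF finite_carrier] by blast

lemma finite_monic_polys_deg_le: "finite {P. monic_poly R P \<and> degree P \<le> n}"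
proof -
  have "{P. monic_poly R P \<and> degree P \<le> n} = (\<Union>m\<le>n. monic_polys_deg R m)"
    unfolding monic_polys_deg_def by auto
  thus ?thesis using finite_monic_polys_deg by simp
qed

lemma finite_prime_power_divisors:
  assumes "monic_poly R F"
  shows "finite (prime_power_divisors F)"
proof (rule finite_subset)
  show "prime_power_divisors F \<subseteq> {P. monic_poly R P \<and> degree P \<le> degree F} \<times> {..degree F}"
  proof
    fix x assume "x \<in> prime_power_divisors F"
    then obtain P and j :: nat where x: "x = (P, j)" "monic_poly R P" "pirreducible (carrier R) P"
        "0 < j" "P [^]\<^bsub>poly_ring R\<^esub> j pdivides F"
      unfolding prime_power_divisors_def by auto
    have "P pdivides F" using pow_pdivides_imp_pdivides[OF monic_poly_carrier[OF x(2)] x(5)] x(4) by simp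
    hence "degree P \<le> degree F" using monic_poly_pdivides_degree_le[OF monic_poly_carrier[OF x(2)] assms] by simp
    thus "x \<in> {P. monic_poly R P \<and> degree P \<le> degree F} \<times> {..degree F}"
      using x pow_pdivides_degree_le(2)[OF x(2-3) assms x(5)] by auto
  qed
qed (intro finite_cartesian_product finite_monic_polys_deg_le finite_atMost)

lemma sum_prime_power_divisors_split:
  assumes "monic_poly R P" "pirreducible (carrier R) P" "monic_poly R H"
  shows "(\<Sum>x\<in>prime_power_divisors H. degree (fst x))
    = (\<Sum>x\<in>{x\<in>prime_power_divisors H. fst x \<noteq> P}. degree (fst x))
      + card {j::nat. 0 < j \<and> P [^]\<^bsub>poly_ring R\<^esub> j pdivides H} * degree P"
proof -
  have "{x\<in>prime_power_divisors H. fst x = P} = Pair P ` {j. 0 < j \<and> P [^]\<^bsub>poly_ring R\<^esub> j pdivides H}"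
    unfolding prime_power_divisors_def using assms(1,2) by auto
  hence "(\<Sum>x\<in>{x\<in>prime_power_divisors H. fst x = P}. degree (fst x))
      = card {j::nat. 0 < j \<and> P [^]\<^bsub>poly_ring R\<^esub> j pdivides H} * degree P"
    by (simp add: sum.reindex inj_on_def)
  moreover have "(\<Sum>x\<in>prime_power_divisors H. degree (fst x))
      = (\<Sum>x\<in>{x\<in>prime_power_divisors H. fst x \<noteq> P}. degree (fst x))
      + (\<Sum>x\<in>{x\<in>prime_power_divisors H. fst x = P}. degree (fst x))"
    using finite_prime_power_divisors[OF assms(3)]
    by (subst sum.union_disjoint[symmetric]) (auto intro: sum.cong)
  ultimately show ?thesis by simp
qed

lemma sum_prime_power_divisors_mult:
  assumes P: "monic_poly R P" "pirreducible (carrier R) P" and G: "monic_poly R G"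
  shows "(\<Sum>x\<in>prime_power_divisors (P \<otimes>\<^bsub>poly_ring R\<^esub> G). degree (fst x))
       = degree P + (\<Sum>x\<in>prime_power_divisors G. degree (fst x))"
proof -
  have "{x\<in>prime_power_divisors (P \<otimes>\<^bsub>poly_ring R\<^esub> G). fst x \<noteq> P} = {x\<in>prime_power_divisors G. fst x \<noteq> P}"
    unfolding prime_power_divisors_def using pow_pdivides_mult_iff[OF P _ _ _ monic_poly_carrier[OF G]] by auto
  thus ?thesis
    using sum_prime_power_divisors_split[OF P monic_poly_mult(1)[OF P(1) G]] sum_prime_power_divisors_split[OF P G]
      card_pow_pdivides_mult[OF P G] by simp
qed

lemma degree_eq_sum_prime_power_divisors:
  "monic_poly R F \<Longrightarrow> degree F = (\<Sum>x\<in>prime_power_divisors F. degree (fst x))"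
proof (induction "degree F" arbitrary: F rule: less_induct)
  case less
  show ?case
  proof (cases "degree F = 0")
    case True
    hence "prime_power_divisors F = {}"
      using pow_pdivides_degree_le(2)[OF _ _ less.prems] unfolding prime_power_divisors_def by fastforce
    thus ?thesis using True by simp
  next
    case False
    then obtain P where P: "monic_poly R P" "pirreducible (carrier R) P" "P pdivides F"
      using exists_monic_pirreducible_pdivisor[OF less.prems] by (metis less_one not_less)
    obtain G where G: "monic_poly R G" "F = P \<otimes>\<^bsub>poly_ring R\<^esub> G"
      using monic_pdividesE[OF P(1) less.prems P(3)] .
    have deg: "degree F = degree P + degree G" using monic_poly_mult(2)[OF P(1) G(1)] G(2) by simp
    hence "degree G < degree F" using pirreducible_degree_ge_1[OF P(1,2)] by simp
    hence "degree G = (\<Sum>x\<in>prime_power_divisors G. degree (fst x))" using less.hyps[OF _ G(1)] by simp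
    thus ?thesis unfolding deg unfolding G(2) sum_prime_power_divisors_mult[OF P(1,2) G(1)] by simp
  qed
qed

lemma finite_rough_polys: "finite (rough_polys d m)"
  unfolding rough_polys_def using finite_monic_polys_deg by simp

lemma card_rough_polys_le: "card (rough_polys d m) \<le> card (carrier R) ^ m"
  using card_mono[OF finite_monic_polys_deg, of "rough_polys d m" m] card_monic_polys_deg
  unfolding rough_polys_def by auto

text \<open>Count pairs \<open>(F, (P, j))\<close> with \<open>P\<^sup>j\<close> dividing the rough polynomial \<open>F\<close>, weighted by
  \<open>degree P\<close>: summing over \<open>F\<close> first gives \<open>m\<close> per polynomial, summing over \<open>(P, j)\<close> first counts
  the rough cofactors of degree \<open>m - j * degree P\<close>.\<close>
lemma card_rough_polys_double_counting:
  "m * card (rough_polys d m)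
    = (\<Sum>(P, j)\<in>rough_prime_powers d m. degree P * card (rough_polys d (m - j * degree P)))"
proof -
  let ?U = "rough_prime_powers d m"
  let ?pow_dvd = "\<lambda>F (x :: 'a list \<times> nat). fst x [^]\<^bsub>poly_ring R\<^esub> snd x pdivides F"
  have finite_U: "finite ?U"
    unfolding rough_prime_powers_eq_Sigma using finite_monic_polys_deg_le[of m]
    by (intro finite_SigmaI) (auto elim!: finite_subset[rotated])
  have "m * card (rough_polys d m) = (\<Sum>F\<in>rough_polys d m. degree F)"
    by (simp add: rough_polys_def monic_polys_deg_def)
  also have "\<dots> = (\<Sum>F\<in>rough_polys d m. \<Sum>x\<in>{x\<in>?U. ?pow_dvd F x}. degree (fst x))"
  proof (rule sum.cong[OF refl])
    fix F assume F: "F \<in> rough_polys d m"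
    hence "monic_poly R F" unfolding rough_polys_def monic_polys_deg_def by simp
    thus "degree F = (\<Sum>x\<in>{x\<in>?U. ?pow_dvd F x}. degree (fst x))"
      unfolding prime_power_divisors_of_rough[OF F, symmetric] by (rule degree_eq_sum_prime_power_divisors)
  qed
  also have "\<dots> = (\<Sum>x\<in>?U. \<Sum>F\<in>{F\<in>rough_polys d m. ?pow_dvd F x}. degree (fst x))"
    by (rule sum.swap_restrict[OF finite_rough_polys finite_U])
  also have "\<dots> = (\<Sum>(P, j)\<in>?U. degree P * card (rough_polys d (m - j * degree P)))"
  proof (rule sum.cong[OF refl])
    fix x assume "x \<in> ?U"
    then obtain P j where x: "x = (P, j)" "monic_poly R P" "pirreducible (carrier R) P" "d \<le> degree P"
        "j * degree P \<le> m"
      unfolding rough_prime_powers_def by auto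
    show "(\<Sum>F\<in>{F\<in>rough_polys d m. ?pow_dvd F x}. degree (fst x))
        = (case x of (P, j) \<Rightarrow> degree P * card (rough_polys d (m - j * degree P)))"
      using card_rough_polys_pow_pdivides[OF x(2-5)] unfolding x by simp
  qed
  finally show ?thesis .
qed

theorem card_rough_polys_recurrence:
  "m * card (rough_polys d m) = (\<Sum>k\<in>{d..m}. card (monic_irreducibles k) *
     (k * (\<Sum>j\<in>{1..m div k}. card (rough_polys d (m - j*k)))))"
proof -
  define Irr where "Irr = {P. monic_poly R P \<and> pirreducible (carrier R) P \<and> degree P \<in> {d..m}}"
  have finite_Irr: "finite Irr"
    using finite_monic_polys_deg_le[of m] unfolding Irr_def by (rule finite_subset[rotated]) auto
  have "m * card (rough_polys d m)
      = (\<Sum>P\<in>Irr. \<Sum>j\<in>{1..m div degree P}. degree P * card (rough_polys d (m - j * degree P)))"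
    unfolding card_rough_polys_double_counting rough_prime_powers_eq_Sigma Irr_def[symmetric]
    by (subst sum.Sigma[OF finite_Irr]) auto
  also have "\<dots> = (\<Sum>k\<in>{d..m}. \<Sum>P\<in>{P\<in>Irr. degree P = k}.
      \<Sum>j\<in>{1..m div degree P}. degree P * card (rough_polys d (m - j * degree P)))"
    by (rule sum.group[symmetric, OF finite_Irr]) (auto simp: Irr_def)
  also have "\<dots> = (\<Sum>k\<in>{d..m}. card (monic_irreducibles k) *
      (k * (\<Sum>j\<in>{1..m div k}. card (rough_polys d (m - j*k)))))"
  proof (rule sum.cong[OF refl])
    fix k assume "k \<in> {d..m}"
    hence "{P\<in>Irr. degree P = k} = monic_irreducibles k" unfolding Irr_def monic_irreducibles_def by auto
    thus "(\<Sum>P\<in>{P\<in>Irr. degree P = k}. \<Sum>j\<in>{1..m div degree P}. degree P * card (rough_polys d (m - j * degree P)))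
        = card (monic_irreducibles k) * (k * (\<Sum>j\<in>{1..m div k}. card (rough_polys d (m - j*k))))"
      by (simp add: monic_irreducibles_def sum_distrib_left)
  qed
  finally show ?thesis .
qed

end

section \<open>Bounds from the recurrence\<close>

lemma sum_power_le_twice_first:
  fixes x :: real
  assumes "0 \<le> x" "x \<le> 1/2"
  shows "(\<Sum>k\<in>{a..b}. x^k) \<le> 2 * x^a"
proof -
  have "(\<Sum>i<n. x^(a+i)) \<le> 2 * x^a - 2 * x^(a+n)" for n
  proof (induction n)
    case (Suc n)
    have "2 * x^(a + Suc n) \<le> x^(a+n)"
      using assms mult_right_mono[of "2*x" 1 "x^(a+n)"] by simp
    thus ?case using Suc by simp
  qed simp
  hence geometric: "(\<Sum>i<n. x^(a+i)) \<le> 2 * x^a" for n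
    using assms by (smt (verit) zero_le_power)
  show ?thesis
  proof (cases "a \<le> b")
    case True
    have "{0..b-a} = {..<Suc (b-a)}" by auto
    hence "(\<Sum>k\<in>{a..b}. x^k) = (\<Sum>i<Suc (b-a). x^(a+i))"
      using sum.atLeastAtMost_shift_0[OF True, of "\<lambda>k. x^k"] unfolding comp_def by simp
    also have "\<dots> \<le> 2 * x^a" by (rule geometric)
    finally show ?thesis .
  qed (use assms in simp)
qed

lemma sum_power_le_twice_last:
  fixes Q :: real
  assumes "Q \<ge> 2"
  shows "(\<Sum>j\<in>{1..t}. Q^j) \<le> 2 * Q^t"
proof (induction t)
  case (Suc t)
  have "(\<Sum>j\<in>{1..Suc t}. Q^j) \<le> 2 * Q^t + Q^Suc t" using Suc by simp
  also have "2 * Q^t \<le> Q^Suc t" using assms by (simp add: mult_right_mono)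
  finally show ?case by simp
qed simp

lemma sum_power_multiples_Suc:
  fixes q :: nat
  assumes "k \<ge> 1"
  shows "(\<Sum>j\<in>{1..Suc m div k}. q^(Suc m - j*k)) =
     q * (\<Sum>j\<in>{1..m div k}. q^(m - j*k)) + (if k dvd Suc m then 1 else 0)"
proof -
  have shift: "(\<Sum>j\<in>{1..m div k}. q^(Suc m - j*k)) = q * (\<Sum>j\<in>{1..m div k}. q^(m - j*k))"
    unfolding sum_distrib_left
  proof (rule sum.cong[OF refl])
    fix j assume "j \<in> {1..m div k}"
    hence "j * k \<le> m" using assms by (simp add: less_eq_div_iff_mult_less_eq)
    thus "q^(Suc m - j*k) = q * q^(m - j*k)" by (simp add: Suc_diff_le)
  qed
  show ?thesis
  proof (cases "k dvd Suc m")
    case True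
    hence div: "Suc m div k = Suc (m div k)" using div_Suc[of m k] by simp
    hence "Suc (m div k) * k = Suc m" using True by (metis dvd_div_mult_self)
    thus ?thesis using shift True unfolding div by simp
  next
    case False
    hence "Suc m div k = m div k" using div_Suc[of m k] by (auto simp: dvd_eq_mod_eq_0)
    thus ?thesis using shift False by simp
  qed
qed

text \<open>Subtracting \<open>q\<close> times the identity for \<open>m\<close> from the identity for \<open>m + 1\<close> leaves exactly the
  terms \<open>k * I k\<close> with \<open>k dvd m + 1\<close>.\<close>
lemma gauss_formula_from_recurrence:
  fixes q :: nat and I :: "nat \<Rightarrow> nat"
  assumes recurrence: "\<And>m. m * q^m = (\<Sum>k\<in>{1..m}. I k * (k * (\<Sum>j\<in>{1..m div k}. q^(m - j*k))))"
    and "n \<ge> 1"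
  shows "(\<Sum>k\<in>{1..n}. if k dvd n then k * I k else 0) = q^n"
proof -
  obtain m where n: "n = Suc m" using \<open>n \<ge> 1\<close> by (cases n) auto
  define h where "h k m = (\<Sum>j\<in>{1..m div k}. q^(m - j*k))" for k m
  define divisor_sum where "divisor_sum = (\<Sum>k\<in>{1..Suc m}. if k dvd Suc m then k * I k else 0)"
  have "Suc m * q^Suc m = (\<Sum>k\<in>{1..Suc m}. I k * (k * h k (Suc m)))"
    using recurrence[of "Suc m"] unfolding h_def .
  also have "\<dots> = (\<Sum>k\<in>{1..Suc m}. q * (I k * (k * h k m)) + (if k dvd Suc m then k * I k else 0))"
  proof (rule sum.cong[OF refl])
    fix k assume "k \<in> {1..Suc m}"
    hence "h k (Suc m) = q * h k m + (if k dvd Suc m then 1 else 0)"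
      unfolding h_def using sum_power_multiples_Suc[of k q m] by simp
    thus "I k * (k * h k (Suc m)) = q * (I k * (k * h k m)) + (if k dvd Suc m then k * I k else 0)"
      by (simp add: algebra_simps)
  qed
  also have "\<dots> = q * (\<Sum>k\<in>{1..Suc m}. I k * (k * h k m)) + divisor_sum"
    unfolding divisor_sum_def by (simp only: sum.distrib sum_distrib_left)
  also have "(\<Sum>k\<in>{1..Suc m}. I k * (k * h k m)) = (\<Sum>k\<in>{1..m}. I k * (k * h k m))"
    by (simp add: h_def)
  also have "\<dots> = m * q^m" using recurrence[of m] unfolding h_def by simp
  finally have "divisor_sum = q^Suc m" by (simp add: algebra_simps)
  thus ?thesis unfolding divisor_sum_def n .
qed

text \<open>Gauss's formula gives \<open>q\<^sup>k - k I k \<le> 2 q\<^bsup>k div 2\<^esup>\<close>, a relative error of at most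
  \<open>2 q\<^bsup>-(k - k div 2)\<^esup> \<le> gauss_error k\<close>.\<close>
definition gauss_error :: "nat \<Rightarrow> real" where
  "gauss_error k = 2 * (1/2)^(k - k div 2)"

lemma gauss_error_nonneg: "0 \<le> gauss_error k"
  unfolding gauss_error_def by simp

lemma gauss_error_le:
  assumes "j \<le> k - k div 2"
  shows "gauss_error k \<le> 2 * (1/2)^j"
  unfolding gauss_error_def using power_decreasing[OF assms, of "1/2::real"] by simp

lemma sum_gauss_error_le: "(\<Sum>k\<in>{1..M}. gauss_error k) \<le> 4"
proof -
  have pairs: "(\<Sum>k\<in>{1..2*i}. gauss_error k) = 4 - 4 * (1/2)^i" for i
  proof (induction i)
    case (Suc i)
    have "{1..2 * Suc i} = insert (2*i+2) (insert (2*i+1) {1..2*i})" by auto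
    moreover have "(2*i+1) - (2*i+1) div 2 = Suc i" "(2*i+2) - (2*i+2) div 2 = Suc i" by presburger+
    ultimately show ?case using Suc by (simp add: gauss_error_def)
  qed simp
  have "(\<Sum>k\<in>{1..M}. gauss_error k) \<le> (\<Sum>k\<in>{1..2*M}. gauss_error k)"
    by (rule sum_mono2) (auto simp: gauss_error_nonneg)
  also have "\<dots> = 4 - 4 * (1/2)^M" by (rule pairs)
  also have "\<dots> \<le> 4" by simp
  finally show ?thesis .
qed

lemma half_power_le_gauss_error:
  fixes Q :: real
  assumes "Q \<ge> 2"
  shows "2 * Q ^ (k div 2) \<le> Q^k * gauss_error k"
proof -
  define r where "r = k - k div 2"
  have "Q^k = Q^(k div 2) * Q^r" unfolding r_def by (simp add: power_add[symmetric])
  moreover have "(2::real)^r \<le> Q^r" using assms by (simp add: power_mono)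
  moreover have "gauss_error k = 2 / 2^r" unfolding gauss_error_def r_def by (simp add: power_divide)
  ultimately have "Q^k * gauss_error k = 2 * Q^(k div 2) * (Q^r / 2^r)" by simp
  moreover have "Q^r / 2^r \<ge> 1" using \<open>2^r \<le> Q^r\<close> by simp
  moreover have "0 \<le> 2 * Q^(k div 2)" using assms by simp
  ultimately show ?thesis by (metis mult_left_mono mult.right_neutral)
qed

lemma power_mult_le_half_powers:
  fixes Q :: real
  assumes Q: "Q \<ge> 2" and "k \<ge> 1" "j \<ge> 2" "j * k \<le> m"
  shows "Q^k * Q^(m - j*k) \<le> Q^m * (4 * (1/2)^k * (1/2)^j)"
proof -
  obtain i where i: "j = i + 2" using \<open>j \<ge> 2\<close> by (metis add.commute le_Suc_ex)
  define B where "B = Q^((i+1)*k)"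
  have "m = k + (m - j*k) + (i+1)*k" using \<open>j * k \<le> m\<close> unfolding i by (simp add: algebra_simps)
  hence QmB: "Q^m = Q^k * Q^(m - j*k) * B" unfolding B_def by (metis power_add)
  have "k + j \<le> (i+1)*k + 2" using \<open>k \<ge> 1\<close> unfolding i by (simp add: algebra_simps)
  hence "(2::real)^(k+j) \<le> 2^((i+1)*k + 2)" by (rule power_increasing) simp
  also have "\<dots> = 4 * 2^((i+1)*k)" by (simp add: power_add)
  also have "(2::real)^((i+1)*k) \<le> B" unfolding B_def by (rule power_mono) (use Q in auto)
  finally have "(2::real)^(k+j) \<le> 4 * B" by simp
  moreover have "0 \<le> Q^k * Q^(m - j*k)" using Q by simp
  ultimately have "Q^k * Q^(m - j*k) * 2^(k+j) \<le> Q^k * Q^(m - j*k) * (4 * B)"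
    by (rule mult_left_mono)
  hence "Q^k * Q^(m - j*k) \<le> Q^k * Q^(m - j*k) * (4 * B) / 2^(k+j)"
    by (simp add: field_simps)
  also have "\<dots> = Q^m * (4 * (1/2)^k * (1/2)^j)"
    unfolding QmB by (simp add: power_add field_simps power_one_over)
  finally show ?thesis .
qed

text \<open>In the application \<open>q\<close> is the size of the field, \<open>I k\<close> the number of monic irreducibles of
  degree \<open>k\<close> and \<open>\<rho> m\<close> the number of \<open>d\<close>-rough monic polynomials of degree \<open>m\<close>.\<close>
locale gauss_counts =
  fixes q :: nat and I :: "nat \<Rightarrow> nat"
  assumes q_ge_2: "q \<ge> 2"
    and gauss_formula: "\<And>n. n \<ge> 1 \<Longrightarrow> (\<Sum>k\<in>{1..n}. if k dvd n then k * I k else 0) = q^n"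
begin

abbreviation Q :: real where "Q \<equiv> real q"

lemma Q_ge_2: "Q \<ge> 2"
  using q_ge_2 by simp

lemma count_le_power:
  assumes "k \<ge> 1"
  shows "real (k * I k) \<le> Q^k"
proof -
  have "(if k dvd k then k * I k else 0) \<le> (\<Sum>j\<in>{1..k}. if j dvd k then j * I j else 0)"
    by (rule member_le_sum) (use assms in auto)
  hence "k * I k \<le> q^k" using gauss_formula[OF assms] by simp
  thus ?thesis by (metis of_nat_le_iff of_nat_power)
qed

lemma power_le_count_plus:
  assumes "k \<ge> 1"
  shows "Q^k \<le> real (k * I k) + (\<Sum>j\<in>{1..k div 2}. Q^j)"
proof -
  obtain k' where k: "k = Suc k'" using assms by (cases k) auto
  define g where "g j = (if j dvd k then real (j * I j) else 0)" for j
  have "Q^k = real (\<Sum>j\<in>{1..k}. if j dvd k then j * I j else 0)"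
    using gauss_formula[OF assms] by simp
  also have "\<dots> = (\<Sum>j\<in>{1..k}. g j)" unfolding g_def of_nat_sum by (rule sum.cong) auto
  also have "\<dots> = g k + (\<Sum>j\<in>{1..k'}. g j)" unfolding k by (simp add: atLeastAtMostSuc_conv)
  also have "(\<Sum>j\<in>{1..k'}. g j) \<le> (\<Sum>j\<in>{1..k'}. if j \<le> k div 2 then Q^j else 0)"
  proof (rule sum_mono)
    fix j assume j: "j \<in> {1..k'}"
    show "g j \<le> (if j \<le> k div 2 then Q^j else 0)"
    proof (cases "j dvd k")
      case True
      then obtain c where c: "k = j * c" by blast
      moreover have "c \<noteq> 0" using c k by (metis mult_0_right nat.simps(3))
      moreover have "c \<noteq> 1" using c j k by auto
      ultimately have "c \<ge> 2" by simp
      hence "j \<le> k div 2" using c by (simp add: less_eq_div_iff_mult_less_eq)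
      thus ?thesis using count_le_power j True unfolding g_def by simp
    qed (simp add: g_def)
  qed
  also have "(\<Sum>j\<in>{1..k'}. if j \<le> k div 2 then Q^j else 0) = (\<Sum>j\<in>{1..k div 2}. Q^j)"
  proof -
    have "{j\<in>{1..k'}. j \<le> k div 2} = {1..k div 2}" using k by auto
    thus ?thesis by (simp add: sum.inter_filter[symmetric])
  qed
  finally show ?thesis unfolding g_def by simp
qed

lemma count_ge_gauss_error:
  assumes "k \<ge> 1"
  shows "real (k * I k) \<ge> Q^k * (1 - gauss_error k)"
  using power_le_count_plus[OF assms] sum_power_le_twice_last[OF Q_ge_2, of "k div 2"]
    half_power_le_gauss_error[OF Q_ge_2, of k]
  by (simp add: algebra_simps)

lemma count_ge_half_power:
  assumes "k \<ge> 1"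
  shows "real (k * I k) \<ge> Q^k / 2"
proof -
  consider "k = 1" | "k = 2" | "k \<ge> 3" using assms by linarith
  thus ?thesis
  proof cases
    case 1
    thus ?thesis using power_le_count_plus[OF assms] Q_ge_2 by simp
  next
    case 2
    have "Q^2/2 \<ge> Q" using Q_ge_2 by (simp add: power2_eq_square)
    thus ?thesis using power_le_count_plus[OF assms] 2 by simp
  next
    case 3
    have "gauss_error k \<le> 2 * (1/2)^2" by (rule gauss_error_le) (use 3 in linarith)
    hence "Q^k / 2 \<le> Q^k * (1 - gauss_error k)"
      using Q_ge_2 by (simp add: power2_eq_square mult_left_mono)
    thus ?thesis using count_ge_gauss_error[OF assms] by simp
  qed
qed

end

locale rough_counts = gauss_counts +
  fixes \<rho> :: "nat \<Rightarrow> nat" and d :: nat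
  assumes d_pos: "d \<ge> 1"
    and rough_recurrence:
      "\<And>m. m * \<rho> m = (\<Sum>k\<in>{d..m}. I k * (k * (\<Sum>j\<in>{1..m div k}. \<rho> (m - j*k))))"
    and rho_0: "\<rho> 0 = 1"
    and rho_le_power: "\<And>m. \<rho> m \<le> q^m"
begin

lemma rho_eq_0: "0 < m \<Longrightarrow> m < d \<Longrightarrow> \<rho> m = 0"
  using rough_recurrence[of m] by simp

definition higher_power_terms :: "nat \<Rightarrow> real" where
  "higher_power_terms m = (\<Sum>k\<in>{d..m}. real (k * I k) * (\<Sum>j\<in>{2..m div k}. real (\<rho> (m - j*k))))"

lemma higher_power_terms_nonneg: "higher_power_terms m \<ge> 0"
  unfolding higher_power_terms_def by (intro sum_nonneg mult_nonneg_nonneg) auto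

lemma higher_power_term_le:
  assumes "k \<ge> 1"
  shows "real (k * I k) * (\<Sum>j\<in>{2..m div k}. real (\<rho> (m - j*k))) \<le> Q^m * (2 * (1/2)^k)"
proof -
  have "(\<Sum>j\<in>{2..m div k}. real (\<rho> (m - j*k))) \<le> (\<Sum>j\<in>{2..m div k}. Q^(m - j*k))"
    by (rule sum_mono) (metis of_nat_le_iff of_nat_power rho_le_power)
  hence "real (k * I k) * (\<Sum>j\<in>{2..m div k}. real (\<rho> (m - j*k)))
      \<le> Q^k * (\<Sum>j\<in>{2..m div k}. Q^(m - j*k))"
    by (intro mult_mono count_le_power assms) (auto intro: sum_nonneg)
  also have "\<dots> = (\<Sum>j\<in>{2..m div k}. Q^k * Q^(m - j*k))" by (simp add: sum_distrib_left)
  also have "\<dots> \<le> (\<Sum>j\<in>{2..m div k}. Q^m * (4 * (1/2)^k * (1/2)^j))"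
  proof (rule sum_mono)
    fix j assume j: "j \<in> {2..m div k}"
    hence "j * k \<le> m" using assms by (simp add: less_eq_div_iff_mult_less_eq)
    thus "Q^k * Q^(m - j*k) \<le> Q^m * (4 * (1/2)^k * (1/2)^j)"
      using power_mult_le_half_powers[OF Q_ge_2 assms] j by simp
  qed
  also have "\<dots> = Q^m * (4 * (1/2)^k) * (\<Sum>j\<in>{2..m div k}. (1/2)^j)"
    by (simp add: sum_distrib_left mult.assoc)
  also have "\<dots> \<le> Q^m * (4 * (1/2)^k) * (2 * (1/2)^2)"
    by (rule mult_left_mono[OF sum_power_le_twice_first]) (use Q_ge_2 in auto)
  also have "\<dots> = Q^m * (2 * (1/2)^k)" by (simp add: power2_eq_square)
  finally show ?thesis .
qed

lemma higher_power_terms_le: "higher_power_terms m \<le> 4 * Q^m / real d"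
proof -
  have "higher_power_terms m \<le> (\<Sum>k\<in>{d..m}. Q^m * (2 * (1/2)^k))"
    unfolding higher_power_terms_def using d_pos by (intro sum_mono higher_power_term_le) auto
  also have "\<dots> = 2 * Q^m * (\<Sum>k\<in>{d..m}. (1/2)^k)" unfolding sum_distrib_left by (simp add: mult_ac)
  also have "\<dots> \<le> 2 * Q^m * (2 * (1/2)^d)"
    by (rule mult_left_mono[OF sum_power_le_twice_first]) (use Q_ge_2 in auto)
  also have "(1/2::real)^d \<le> 1 / real d"
  proof -
    have "real d \<le> 2^d" using less_exp[of d] by (metis less_imp_le of_nat_le_iff of_nat_numeral of_nat_power)
    thus ?thesis using d_pos by (simp add: power_one_over field_simps)
  qed
  finally show ?thesis using Q_ge_2 by (simp add: mult_left_mono)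
qed

text \<open>In the \<open>j = 1\<close> part of the recurrence only \<open>k = m\<close> and \<open>k \<le> m - d\<close> contribute, since
  \<open>\<rho>\<close> vanishes on \<open>{1..<d}\<close>.\<close>
lemma rough_recurrence_split:
  assumes "d \<le> m"
  shows "real m * real (\<rho> m) = real (m * I m)
    + (\<Sum>k\<in>{d..m-d}. real (k * I k) * real (\<rho> (m - k))) + higher_power_terms m"
proof -
  define T where "T k = real (k * I k)" for k
  have first_term: "(\<Sum>j\<in>{1..m div k}. real (\<rho> (m - j*k))) =
      real (\<rho> (m - k)) + (\<Sum>j\<in>{2..m div k}. real (\<rho> (m - j*k)))" if "k \<in> {d..m}" for k
  proof -
    have "m div k \<ge> 1" using that d_pos by (simp add: less_eq_div_iff_mult_less_eq)
    hence "{1..m div k} = insert 1 {2..m div k}" by auto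
    thus ?thesis by simp
  qed
  have "(\<Sum>k\<in>{d..m}. T k * real (\<rho> (m - k))) = (\<Sum>k\<in>insert m {d..m-d}. T k * real (\<rho> (m - k)))"
    by (rule sum.mono_neutral_right) (use assms rho_eq_0 in auto)
  also have "\<dots> = T m + (\<Sum>k\<in>{d..m-d}. T k * real (\<rho> (m - k)))"
  proof -
    have "m \<notin> {d..m-d}" using d_pos assms by auto
    thus ?thesis using rho_0 by (simp add: T_def)
  qed
  finally have j1: "(\<Sum>k\<in>{d..m}. T k * real (\<rho> (m - k))) = T m + (\<Sum>k\<in>{d..m-d}. T k * real (\<rho> (m - k)))" .
  have "real m * real (\<rho> m) = (\<Sum>k\<in>{d..m}. T k * (\<Sum>j\<in>{1..m div k}. real (\<rho> (m - j*k))))"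
    using arg_cong[OF rough_recurrence[of m], of real] unfolding T_def by (simp add: algebra_simps)
  also have "\<dots> = (\<Sum>k\<in>{d..m}. T k * real (\<rho> (m - k)) + T k * (\<Sum>j\<in>{2..m div k}. real (\<rho> (m - j*k))))"
  proof (rule sum.cong[OF refl])
    fix k assume "k \<in> {d..m}"
    show "T k * (\<Sum>j\<in>{1..m div k}. real (\<rho> (m - j*k)))
        = T k * real (\<rho> (m - k)) + T k * (\<Sum>j\<in>{2..m div k}. real (\<rho> (m - j*k)))"
      unfolding first_term[OF \<open>k \<in> {d..m}\<close>] by (rule distrib_left)
  qed
  also have "\<dots> = (\<Sum>k\<in>{d..m}. T k * real (\<rho> (m - k))) + higher_power_terms m"
    unfolding higher_power_terms_def T_def by (rule sum.distrib)
  finally show ?thesis using j1 by (simp add: T_def)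
qed

lemma middle_terms_le:
  assumes "\<And>k. k \<in> {d..m-d} \<Longrightarrow> real (\<rho> (m - k)) \<le> c * Q^(m-k)"
  shows "(\<Sum>k\<in>{d..m-d}. real (k * I k) * real (\<rho> (m - k))) \<le> real (card {d..m-d}) * (c * Q^m)"
proof -
  have "(\<Sum>k\<in>{d..m-d}. real (k * I k) * real (\<rho> (m - k))) \<le> (\<Sum>k\<in>{d..m-d}. c * Q^m)"
  proof (rule sum_mono)
    fix k assume k: "k \<in> {d..m-d}"
    have "real (k * I k) * real (\<rho> (m - k)) \<le> Q^k * (c * Q^(m-k))"
      using count_le_power assms k d_pos by (intro mult_mono) auto
    also have "\<dots> = c * (Q^k * Q^(m-k))" by (simp add: mult_ac)
    also have "Q^k * Q^(m-k) = Q^m" using k by (auto simp flip: power_add)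
    finally show "real (k * I k) * real (\<rho> (m - k)) \<le> c * Q^m" .
  qed
  thus ?thesis by simp
qed

lemma middle_terms_ge:
  assumes "\<And>k. k \<in> {d..m-d} \<Longrightarrow> real (\<rho> (m - k)) \<ge> c * Q^(m-k)" and "c \<ge> 0"
  shows "(\<Sum>k\<in>{d..m-d}. real (k * I k) * real (\<rho> (m - k))) \<ge> (real (card {d..m-d}) - 4) * (c * Q^m)"
proof -
  have "(\<Sum>k\<in>{d..m-d}. (1 - gauss_error k) * (c * Q^m)) \<le> (\<Sum>k\<in>{d..m-d}. real (k * I k) * real (\<rho> (m - k)))"
  proof (rule sum_mono)
    fix k assume k: "k \<in> {d..m-d}"
    hence "1 \<le> k - k div 2" using d_pos by auto
    hence "gauss_error k \<le> 2 * (1/2)^1" by (rule gauss_error_le)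
    hence "Q^k * (1 - gauss_error k) * (c * Q^(m-k)) \<le> real (k * I k) * real (\<rho> (m - k))"
      using count_ge_gauss_error[of k] assms k d_pos Q_ge_2 by (intro mult_mono) auto
    moreover have "Q^k * Q^(m-k) = Q^m" using k by (auto simp flip: power_add)
    ultimately show "(1 - gauss_error k) * (c * Q^m) \<le> real (k * I k) * real (\<rho> (m - k))"
      by (simp add: algebra_simps)
  qed
  moreover have "(\<Sum>k\<in>{d..m-d}. gauss_error k) \<le> 4"
    using sum_mono2[of "{1..m}" "{d..m-d}" gauss_error] sum_gauss_error_le[of m] d_pos gauss_error_nonneg
    by force
  hence "(real (card {d..m-d}) - 4) * (c * Q^m) \<le> (\<Sum>k\<in>{d..m-d}. (1 - gauss_error k) * (c * Q^m))"
    using assms(2) Q_ge_2 by (simp add: sum_subtractf sum_distrib_right[symmetric] mult_right_mono)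
  ultimately show ?thesis by linarith
qed

theorem rho_upper_bound: "m \<ge> 1 \<Longrightarrow> real (\<rho> m) \<le> 5 * Q^m / real d"
proof (induction m rule: less_induct)
  case (less m)
  show ?case
  proof (cases "m < d")
    case True
    thus ?thesis using rho_eq_0 less.prems by simp
  next
    case False
    hence m: "d \<le> m" by simp
    have "real (\<rho> (m - k)) \<le> 5 / real d * Q^(m-k)" if "k \<in> {d..m-d}" for k
      using less.IH[of "m - k"] that d_pos by auto
    hence "(\<Sum>k\<in>{d..m-d}. real (k * I k) * real (\<rho> (m - k))) \<le> real (card {d..m-d}) * (5 / real d * Q^m)"
      by (rule middle_terms_le)
    moreover have "real (m * I m) \<le> Q^m" using count_le_power m d_pos by simp
    ultimately have "real m * real (\<rho> m) \<le> Q^m + real (card {d..m-d}) * (5 / real d * Q^m) + 4 * Q^m / real d"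
      using rough_recurrence_split[OF m] higher_power_terms_le[of m] by linarith
    also have "\<dots> = Q^m / real d * (real d + 5 * real (card {d..m-d}) + 4)"
      using d_pos by (simp add: field_simps)
    also have "\<dots> \<le> Q^m / real d * (5 * real m)"
    proof (rule mult_left_mono)
      have "d + 5 * card {d..m-d} + 4 \<le> 5 * m" using m d_pos by simp
      thus "real d + 5 * real (card {d..m-d}) + 4 \<le> 5 * real m" by linarith
    qed (use Q_ge_2 in simp)
    finally show ?thesis using m d_pos by (simp add: field_simps)
  qed
qed

theorem rho_lower_bound: "m \<ge> d \<Longrightarrow> real (\<rho> m) \<ge> Q^m / (12 * real d)"
proof (induction m rule: less_induct)
  case (less m)
  define c where "c = 1 / (12 * real d)"
  have c_nonneg: "c \<ge> 0" unfolding c_def by simp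
  have "real (\<rho> (m - k)) \<ge> c * Q^(m-k)" if "k \<in> {d..m-d}" for k
    using less.IH[of "m - k"] that d_pos unfolding c_def by auto
  hence "(\<Sum>k\<in>{d..m-d}. real (k * I k) * real (\<rho> (m - k))) \<ge> (real (card {d..m-d}) - 4) * (c * Q^m)"
    using middle_terms_ge c_nonneg by blast
  moreover have "real (m * I m) \<ge> Q^m / 2" using count_ge_half_power less.prems d_pos by simp
  ultimately have "Q^m / 2 + (real (card {d..m-d}) - 4) * (c * Q^m) \<le> real m * real (\<rho> m)"
    using rough_recurrence_split[OF less.prems] higher_power_terms_nonneg[of m] by linarith
  moreover have "real m * (c * Q^m) \<le> Q^m / 2 + (real (card {d..m-d}) - 4) * (c * Q^m)"
  proof -
    have "real m \<le> 6 * real d + real (card {d..m-d}) - 4" using less.prems d_pos by simp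
    hence "real m * (c * Q^m) \<le> (6 * real d + real (card {d..m-d}) - 4) * (c * Q^m)"
      using Q_ge_2 d_pos unfolding c_def by (intro mult_right_mono) auto
    thus ?thesis unfolding c_def using d_pos by (simp add: field_simps)
  qed
  ultimately have "real m * (c * Q^m) \<le> real m * real (\<rho> m)" by linarith
  moreover have "real m > 0" using less.prems d_pos by simp
  ultimately have "c * Q^m \<le> real (\<rho> m)" by (simp only: mult_le_cancel_left_pos)
  thus ?case unfolding c_def by simp
qed

end



context finite_field
begin

lemma gauss_formula_monic_irreducibles:
  assumes "n \<ge> 1"
  shows "(\<Sum>k\<in>{1..n}. if k dvd n then k * card (monic_irreducibles k) else 0) = card (carrier R) ^ n"
proof (rule gauss_formula_from_recurrence[OF _ assms])
  fix m
  show "m * card (carrier R) ^ m = (\<Sum>k\<in>{1..m}. card (monic_irreducibles k) *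
      (k * (\<Sum>j\<in>{1..m div k}. card (carrier R) ^ (m - j*k))))"
    using card_rough_polys_recurrence[of m 1] unfolding rough_polys_1 card_monic_polys_deg .
qed

lemma rough_counts_card_rough_polys:
  assumes "d \<ge> 1"
  shows "rough_counts (card (carrier R)) (\<lambda>k. card (monic_irreducibles k)) (\<lambda>m. card (rough_polys d m)) d"
proof
  show "card (carrier R) \<ge> 2" by (rule card_carrier_ge_2)
  show "(\<Sum>k\<in>{1..n}. if k dvd n then k * card (monic_irreducibles k) else 0) = card (carrier R) ^ n"
    if "n \<ge> 1" for n
    using gauss_formula_monic_irreducibles[OF that] .
  show "m * card (rough_polys d m) = (\<Sum>k\<in>{d..m}. card (monic_irreducibles k) *
      (k * (\<Sum>j\<in>{1..m div k}. card (rough_polys d (m - j*k)))))" for m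
    by (rule card_rough_polys_recurrence)
  show "card (rough_polys d 0) = 1" unfolding rough_polys_0 by simp
  show "card (rough_polys d m) \<le> card (carrier R) ^ m" for m by (rule card_rough_polys_le)
qed (rule assms)

end

theorem mainTheorem10:
  shows "\<exists>(c1::real) (c2::real) (N::real). c1 > 0 \<and> c2 > 0 \<and>
    (\<forall>(R :: nat ring) (n::nat) (d::nat).
       field R \<longrightarrow> finite (carrier R) \<longrightarrow> 1 \<le> d \<longrightarrow> d \<le> n \<longrightarrow>
       real (card (carrier R)) ^ n \<ge> N \<longrightarrow>
       (let q = real (card (carrier R));
            S = {F \<in> monic_polys_deg R n. min_irred_factor_deg R F \<ge> d}
        in c1 * q ^ n / real d \<le> real (card S) \<and> real (card S) \<le> c2 * q ^ n / real d))"
proof (intro exI conjI allI impI)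
  fix R :: "nat ring" and n d :: nat
  assume "field R" "finite (carrier R)" and d: "1 \<le> d" "d \<le> n"
  then interpret finite_field R by (simp add: finite_field_def finite_field_axioms_def)
  interpret rough_counts "card (carrier R)" "\<lambda>k. card (monic_irreducibles k)" "\<lambda>m. card (rough_polys d m)" d
    using rough_counts_card_rough_polys d(1) .
  have S: "{F \<in> monic_polys_deg R n. min_irred_factor_deg R F \<ge> d} = rough_polys d n"
    using min_irred_factor_deg_ge_iff_rough d unfolding rough_polys_def monic_polys_deg_def by auto
  have "Q^n / (12 * real d) \<le> real (card (rough_polys d n))" using rho_lower_bound[OF d(2)] .
  moreover have "real (card (rough_polys d n)) \<le> 5 * Q^n / real d" using rho_upper_bound d by simp
  ultimately show "let q = real (card (carrier R));
            S = {F \<in> monic_polys_deg R n. min_irred_factor_deg R F \<ge> d}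
        in 1/12 * q ^ n / real d \<le> real (card S) \<and> real (card S) \<le> 5 * q ^ n / real d"
    unfolding Let_def S by simp
qed simp_all

end
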